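(* For every $V_{\sf P}\ge \tfrac13$, $$\lim_{\delta\to1}\lim_{p\to0}\frac{{\sf Util}({\sf PEAR})-{\sf Util}({\sf APP})}{{\sf Util}({\sf APP})}\ \ge\ \frac{1}{V_{\sf P}+1}.$$
   Context: Model. Time $t=0,1,2,\dots$, discount factor $\delta\in[0,1)$. Two item types, popular ${\sf P}$ and niche ${\sf N}$, infinitely many items each; at each time $t$ the platform recommends a set $\pi_t$ of two fresh items of chosen types. Utility of item $i$: $u_i=V_{\tau(i)}+\epsilon_i$; outside option: $u_\emptyset=\epsilon_\emptyset$; all noises i.i.d. Gumbel with scale $1$ and mean $0$. User chooses $c_t=\arg\max_{j\in\pi_t\cup\{\emptyset\}}u_j$. $V_{\sf P}$ is a known constant; $V_{\sf N}$ is drawn once, fixed over time, independent of noise, with $\mathbb P(V_{\sf N}=(1-p)/p)=p$, $\mathbb P(V_{\sf N}=-1)=1-p$, $p\in(0,1)$. ${\sf Util}(\pi)=\sum_{t\ge0}\delta^t\mathbb E[\max_{j\in\pi_t\cup\{\emptyset\}}u_j]$ (expectation also over $V_{\sf N}$). ${\sf APP}$ recommends two popular items at every time. Policy ${\sf PEAR}$: let $\rho_1=\frac{e^{(1-p)/p}}{1+e^{V_{\sf P}}+e^{(1-p)/p}}$, $\rho_2=\frac{e^{-1}}{1+e^{V_{\sf P}}+e^{-1}}$. Maintain counters $S,F$ (initially $0$) and $p_0=p$. At each time $t$: if $p_t\ge p$, recommend one popular and one niche item; if the niche item is chosen increment $S$, otherwise increment $F$. If $p_t<p$, recommend two popular items.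 Then set $p_{t+1}=\left(1+\frac{1-p}{p}\cdot\frac{\rho_2^S(1-\rho_2)^F}{\rho_1^S(1-\rho_1)^F}\right)^{-1}$. *)

theory Defs
  imports "HOL-Probability.Probability"
begin

text \<open>Expected value of the maximum of mean-zero, scale-1 Gumbel-perturbed utilities
  over a recommended set with mean values vs plus the outside option (mean 0):
  E[max] = ln (1 + sum of exp V_j) (standard Gumbel/logit fact).\<close>
definition gumbel_emax :: "real list \<Rightarrow> real" where
  "gumbel_emax vs = ln (1 + sum_list (map exp vs))"

text \<open>Probability that the niche item (mean value v) is chosen when the set
  {popular, niche} is recommended (multinomial logit choice probability).\<close>
definition rho :: "real \<Rightarrow> real \<Rightarrow> real" where
  "rho VP v = exp v / (1 + exp VP + exp v)"

definition vgood :: "real \<Rightarrow> real" where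
  "vgood p = (1 - p) / p"

definition niche_pmf :: "real \<Rightarrow> real pmf" where
  "niche_pmf p = map_pmf (\<lambda>b. if b then vgood p else -1) (bernoulli_pmf p)"

text \<open>PEAR's posterior after S successes and F failures (p_0 = p for S = F = 0).\<close>
definition post :: "real \<Rightarrow> real \<Rightarrow> nat \<Rightarrow> nat \<Rightarrow> real" where
  "post VP p S F = inverse (1 + (1 - p) / p *
      ((rho VP (-1)) ^ S * (1 - rho VP (-1)) ^ F) /
      ((rho VP (vgood p)) ^ S * (1 - rho VP (vgood p)) ^ F))"

definition pear_explore :: "real \<Rightarrow> real \<Rightarrow> nat \<Rightarrow> nat \<Rightarrow> bool" where
  "pear_explore VP p S F \<longleftrightarrow> post VP p S F \<ge> p"

primrec pear_state :: "real \<Rightarrow> real \<Rightarrow> real \<Rightarrow> nat \<Rightarrow> (nat \<times> nat) pmf" where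
  "pear_state VP p v 0 = return_pmf (0, 0)"
| "pear_state VP p v (Suc t) =
     bind_pmf (pear_state VP p v t)
       (\<lambda>(S, F). if pear_explore VP p S F
          then map_pmf (\<lambda>b. if b then (Suc S, F) else (S, Suc F)) (bernoulli_pmf (rho VP v))
          else return_pmf (S, F))"

definition pear_reward :: "real \<Rightarrow> real \<Rightarrow> real \<Rightarrow> nat \<times> nat \<Rightarrow> real" where
  "pear_reward VP p v sf = (if pear_explore VP p (fst sf) (snd sf)
      then gumbel_emax [VP, v] else gumbel_emax [VP, VP])"

definition Util_PEAR :: "real \<Rightarrow> real \<Rightarrow> real \<Rightarrow> real" where
  "Util_PEAR VP p \<delta> = (\<Sum>t. \<delta> ^ t *
      measure_pmf.expectation
        (bind_pmf (niche_pmf p) (\<lambda>v. map_pmf (\<lambda>sf. (v, sf)) (pear_state VP p v t)))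
        (\<lambda>(v, sf). pear_reward VP p v sf))"

definition Util_APP :: "real \<Rightarrow> real \<Rightarrow> real \<Rightarrow> real" where
  "Util_APP VP p \<delta> = (\<Sum>t. \<delta> ^ t *
      measure_pmf.expectation (niche_pmf p) (\<lambda>v. gumbel_emax [VP, VP]))"

end

theory Submission
  imports Defs "HOL-Real_Asymp.Real_Asymp"
begin

(* As p -> 0 the prior weight p of a good niche item vanishes while its value (1-p)/p
   explodes, with p * ln (1 + e^V_P + e^((1-p)/p)) -> 1.  In the good world PEAR sees no
   failure with probability -> 1, keeps exploring and gains one extra unit per period; in
   the bad world a single failure pushes the posterior below the prior, so PEAR explores
   exactly until the first failure, i.e. for a geometric time with parameter rho_2.
   Passing p -> 0 through the discounted sum by Tannery's theorem gives
     lim Util(PEAR) = (1 + B)/(1 - delta) + (A - B)/(1 - delta rho_2),  Util(APP) = B/(1 - delta)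
   with B = ln (1 + 2 e^V_P) and A = ln (1 + e^V_P + e^-1).  Hence the relative gain tends
   to 1/B as delta -> 1, and B <= V_P + 1 means e^V_P (e - 2) >= 1, which holds for
   V_P >= 1/3, though barely: e^(1/3) (e - 2) is about 1.0024. *)

lemma rho_pos: "0 < rho VP v"
  unfolding rho_def by (simp add: add_pos_pos)

lemma rho_less_one: "rho VP v < 1"
  unfolding rho_def by (simp add: add_pos_pos)

lemma rho_mono:
  assumes "v \<le> w"
  shows "rho VP v \<le> rho VP w"
proof -
  have "exp v * (1 + exp VP) \<le> exp w * (1 + exp VP)"
    using assms by (intro mult_right_mono) auto
  then show ?thesis
    unfolding rho_def by (simp add: divide_simps add_pos_pos algebra_simps)
qed

lemma abs_mult_rho_less_one:
  fixes \<delta> :: real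
  assumes "\<bar>\<delta>\<bar> < 1"
  shows "\<bar>\<delta> * rho VP v\<bar> < 1"
proof -
  have "\<bar>\<delta>\<bar> * rho VP v \<le> \<bar>\<delta>\<bar>"
    using rho_pos[of VP v] rho_less_one[of VP v] by (intro mult_right_le_one_le) auto
  then show ?thesis
    using assms rho_pos[of VP v] by (simp add: abs_mult)
qed

lemma gumbel_emax_pair: "gumbel_emax [a, b] = ln (1 + exp a + exp b)"
  unfolding gumbel_emax_def by (simp add: add.assoc)

lemma gumbel_emax_nonneg: "0 \<le> gumbel_emax vs"
proof -
  have "0 \<le> sum_list (map exp vs)"
    by (induction vs) auto
  then show ?thesis
    unfolding gumbel_emax_def by simp
qed

lemma gumbel_emax_pair_pos: "0 < gumbel_emax [a, b]"
  unfolding gumbel_emax_pair by (simp add: add_pos_pos)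

definition pear_step :: "real \<Rightarrow> real \<Rightarrow> real \<Rightarrow> nat \<times> nat \<Rightarrow> (nat \<times> nat) pmf" where
  "pear_step VP p v = (\<lambda>(S, F). if pear_explore VP p S F
     then map_pmf (\<lambda>b. if b then (Suc S, F) else (S, Suc F)) (bernoulli_pmf (rho VP v))
     else return_pmf (S, F))"

lemma pear_state_Suc: "pear_state VP p v (Suc t) = bind_pmf (pear_state VP p v t) (pear_step VP p v)"
  by (simp add: pear_step_def)

lemma set_pmf_pear_state: "sf \<in> set_pmf (pear_state VP p v t) \<Longrightarrow> fst sf + snd sf \<le> t"
proof (induction t arbitrary: sf)
  case (Suc t)
  then show ?case
    by (force simp: pear_step_def split: if_splits prod.splits)
qed simp

lemma finite_set_pmf_pear_state: "finite (set_pmf (pear_state VP p v t))"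
proof (rule finite_subset)
  show "set_pmf (pear_state VP p v t) \<subseteq> {..t} \<times> {..t}"
    using set_pmf_pear_state by fastforce
qed simp

lemma pear_explore_iff:
  assumes "0 < p" "p < 1"
  shows "pear_explore VP p S F \<longleftrightarrow>
    rho VP (-1) ^ S * (1 - rho VP (-1)) ^ F \<le> rho VP (vgood p) ^ S * (1 - rho VP (vgood p)) ^ F"
proof -
  define X where "X = rho VP (-1) ^ S * (1 - rho VP (-1)) ^ F"
  define Y where "Y = rho VP (vgood p) ^ S * (1 - rho VP (vgood p)) ^ F"
  have "0 < X" "0 < Y"
    unfolding X_def Y_def using rho_pos rho_less_one by simp_all
  have "post VP p S F = p * Y / (p * Y + (1 - p) * X)"
    unfolding post_def X_def[symmetric] Y_def[symmetric]
    using assms \<open>0 < Y\<close> by (simp add: field_simps)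
  moreover have "0 < p * Y + (1 - p) * X"
    using assms \<open>0 < X\<close> \<open>0 < Y\<close> by (simp add: add_pos_pos)
  ultimately have "pear_explore VP p S F \<longleftrightarrow> p * (p * Y + (1 - p) * X) \<le> p * Y"
    unfolding pear_explore_def by (simp add: le_divide_eq)
  also have "\<dots> \<longleftrightarrow> p * Y + (1 - p) * X \<le> Y"
    using assms by (simp add: mult_le_cancel_left_pos)
  also have "\<dots> \<longleftrightarrow> (1 - p) * X \<le> (1 - p) * Y"
    by (simp add: algebra_simps)
  also have "\<dots> \<longleftrightarrow> X \<le> Y"
    using assms by simp
  finally show ?thesis
    unfolding X_def Y_def .
qed

lemma pear_explore_no_failures:
  assumes "0 < p" "p < 1"
  shows "pear_explore VP p S 0"
proof -
  have "0 \<le> vgood p"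
    using assms unfolding vgood_def by simp
  then have "-1 \<le> vgood p"
    by simp
  then have "rho VP (-1) ^ S \<le> rho VP (vgood p) ^ S"
    by (intro power_mono rho_mono less_imp_le[OF rho_pos])
  then show ?thesis
    using pear_explore_iff[OF assms] by simp
qed

lemma pmf_pear_step_diag:
  assumes "0 < p" "p < 1" "S + F \<le> t"
  shows "pmf (pear_step VP p v (S, F)) (Suc t, 0) = (if (S, F) = (t, 0) then rho VP v else 0)"
proof (cases "pear_explore VP p S F")
  case True
  have "(\<lambda>b. if b then (Suc S, F) else (S, Suc F)) -` {(Suc t, 0)} = (if (S, F) = (t, 0) then {True} else {})"
    using assms(3) by (auto split: if_splits)
  then show ?thesis
    using True rho_pos[of VP v] rho_less_one[of VP v]
    by (simp add: pear_step_def pmf_map measure_pmf_single)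
next
  case False
  then show ?thesis
    using assms pear_explore_no_failures by (auto simp: pear_step_def)
qed

lemma pmf_pear_state_diag:
  assumes "0 < p" "p < 1"
  shows "pmf (pear_state VP p v t) (t, 0) = rho VP v ^ t"
proof (induction t)
  case (Suc t)
  have "pmf (pear_state VP p v (Suc t)) (Suc t, 0)
      = measure_pmf.expectation (pear_state VP p v t) (\<lambda>sf. pmf (pear_step VP p v sf) (Suc t, 0))"
    unfolding pear_state_Suc pmf_bind ..
  also have "\<dots> = measure_pmf.expectation (pear_state VP p v t) (\<lambda>sf. rho VP v * indicator {(t, 0)} sf)"
  proof (intro integral_cong_AE)
    show "AE sf in measure_pmf (pear_state VP p v t).
        pmf (pear_step VP p v sf) (Suc t, 0) = rho VP v * indicator {(t, 0)} sf"
      using set_pmf_pear_state pmf_pear_step_diag[OF assms]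
      by (auto simp: AE_measure_pmf_iff)
  qed simp_all
  also have "\<dots> = rho VP v * pmf (pear_state VP p v t) (t, 0)"
    by (simp add: measure_pmf_single)
  finally show ?case
    using Suc by simp
qed simp

lemma pear_state_no_failures:
  assumes "0 < p" "p < 1" "(S, 0) \<in> set_pmf (pear_state VP p v t)"
  shows "S = t"
  using assms(3)
proof (induction t arbitrary: S)
  case (Suc t)
  then show ?case
    using pear_explore_no_failures[OF assms(1,2)]
    by (fastforce split: if_splits prod.splits)
qed simp

definition explore_prob :: "real \<Rightarrow> real \<Rightarrow> real \<Rightarrow> nat \<Rightarrow> real" where
  "explore_prob VP p v t =
     measure_pmf.prob (pear_state VP p v t) {sf. pear_explore VP p (fst sf) (snd sf)}"

lemma explore_prob_le_one: "explore_prob VP p v t \<le> 1"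
  unfolding explore_prob_def by simp

lemma explore_prob_ge:
  assumes "0 < p" "p < 1"
  shows "rho VP v ^ t \<le> explore_prob VP p v t"
proof -
  have "rho VP v ^ t = measure_pmf.prob (pear_state VP p v t) {(t, 0)}"
    using pmf_pear_state_diag[OF assms] by (simp add: measure_pmf_single)
  also have "\<dots> \<le> explore_prob VP p v t"
    unfolding explore_prob_def using pear_explore_no_failures[OF assms]
    by (intro measure_pmf.finite_measure_mono) auto
  finally show ?thesis .
qed

lemma explore_prob_eq_if_no_explore_after_failure:
  assumes "0 < p" "p < 1"
    and no_explore: "\<And>S F. S + F \<le> t \<Longrightarrow> 0 < F \<Longrightarrow> \<not> pear_explore VP p S F"
  shows "explore_prob VP p v t = rho VP v ^ t"
proof -
  have "sf = (t, 0)"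
    if explore: "pear_explore VP p (fst sf) (snd sf)" and sf: "sf \<in> set_pmf (pear_state VP p v t)" for sf
  proof -
    have "snd sf = 0"
      using no_explore[of "fst sf" "snd sf"] set_pmf_pear_state[OF sf] explore by auto
    then show ?thesis
      using pear_state_no_failures[OF assms(1,2), of "fst sf"] sf by (metis prod.collapse)
  qed
  then have "{sf. pear_explore VP p (fst sf) (snd sf)} \<inter> set_pmf (pear_state VP p v t) \<subseteq> {(t, 0)}"
    by auto
  then have "measure_pmf.prob (pear_state VP p v t)
      ({sf. pear_explore VP p (fst sf) (snd sf)} \<inter> set_pmf (pear_state VP p v t))
      \<le> measure_pmf.prob (pear_state VP p v t) {(t, 0)}"
    by (rule measure_pmf.finite_measure_mono) simp
  then have "explore_prob VP p v t \<le> measure_pmf.prob (pear_state VP p v t) {(t, 0)}"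
    unfolding explore_prob_def by (simp add: measure_Int_set_pmf)
  also have "\<dots> = rho VP v ^ t"
    using pmf_pear_state_diag[OF assms(1,2)] by (simp add: measure_pmf_single)
  finally show ?thesis
    using explore_prob_ge[OF assms(1,2)] by (intro antisym)
qed

lemma expectation_pear_reward:
  "measure_pmf.expectation (pear_state VP p v t) (pear_reward VP p v) =
     gumbel_emax [VP, VP] + (gumbel_emax [VP, v] - gumbel_emax [VP, VP]) * explore_prob VP p v t"
proof -
  let ?E = "{sf. pear_explore VP p (fst sf) (snd sf)}"
  have "pear_reward VP p v = (\<lambda>sf. gumbel_emax [VP, VP] +
      (gumbel_emax [VP, v] - gumbel_emax [VP, VP]) * indicator ?E sf)"
    by (auto simp: pear_reward_def fun_eq_iff split: split_indicator)
  moreover have "integrable (measure_pmf (pear_state VP p v t)) f" for f :: "_ \<Rightarrow> real"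
    using finite_set_pmf_pear_state by (rule integrable_measure_pmf_finite)
  ultimately show ?thesis
    unfolding explore_prob_def by simp
qed

lemma expectation_pear_reward_bounds:
  "0 \<le> measure_pmf.expectation (pear_state VP p v t) (pear_reward VP p v)"
  "measure_pmf.expectation (pear_state VP p v t) (pear_reward VP p v) \<le>
     gumbel_emax [VP, v] + gumbel_emax [VP, VP]"
proof -
  have "0 \<le> pear_reward VP p v sf" "pear_reward VP p v sf \<le> gumbel_emax [VP, v] + gumbel_emax [VP, VP]" for sf
    unfolding pear_reward_def using gumbel_emax_nonneg by auto
  then show "0 \<le> measure_pmf.expectation (pear_state VP p v t) (pear_reward VP p v)"
    "measure_pmf.expectation (pear_state VP p v t) (pear_reward VP p v) \<le>
       gumbel_emax [VP, v] + gumbel_emax [VP, VP]"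
    by (simp_all add: integral_nonneg measure_pmf.integral_le_const
        integrable_measure_pmf_finite finite_set_pmf_pear_state)
qed

lemma expectation_pear_reward_niche_prior:
  assumes "0 < p" "p < 1"
  shows "measure_pmf.expectation
      (bind_pmf (niche_pmf p) (\<lambda>v. map_pmf (\<lambda>sf. (v, sf)) (pear_state VP p v t)))
      (\<lambda>(v, sf). pear_reward VP p v sf) =
     p * measure_pmf.expectation (pear_state VP p (vgood p) t) (pear_reward VP p (vgood p))
     + (1 - p) * measure_pmf.expectation (pear_state VP p (-1) t) (pear_reward VP p (-1))"
proof -
  have "measure_pmf.expectation
      (bind_pmf (niche_pmf p) (\<lambda>v. map_pmf (\<lambda>sf. (v, sf)) (pear_state VP p v t)))
      (\<lambda>(v, sf). pear_reward VP p v sf) =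
     (\<Sum>b\<in>UNIV. pmf (bernoulli_pmf p) b *\<^sub>R measure_pmf.expectation
        (map_pmf (\<lambda>sf. (if b then vgood p else -1, sf)) (pear_state VP p (if b then vgood p else -1) t))
        (\<lambda>(v, sf). pear_reward VP p v sf))"
    unfolding niche_pmf_def bind_map_pmf
    by (rule pmf_expectation_bind) (auto simp: finite_set_pmf_pear_state)
  then show ?thesis
    using assms by (simp add: UNIV_bool)
qed

definition pear_mean_reward :: "real \<Rightarrow> real \<Rightarrow> nat \<Rightarrow> real" where
  "pear_mean_reward VP p t =
     p * measure_pmf.expectation (pear_state VP p (vgood p) t) (pear_reward VP p (vgood p))
     + (1 - p) * measure_pmf.expectation (pear_state VP p (-1) t) (pear_reward VP p (-1))"

lemma Util_PEAR_eq:
  assumes "0 < p" "p < 1"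
  shows "Util_PEAR VP p \<delta> = (\<Sum>t. \<delta> ^ t * pear_mean_reward VP p t)"
  unfolding Util_PEAR_def pear_mean_reward_def expectation_pear_reward_niche_prior[OF assms] ..

lemma eventually_at_right_0_less_1: "\<forall>\<^sub>F p in at_right (0::real). 0 < p \<and> p < 1"
  by (simp add: eventually_at_right_field) (auto intro: exI[of _ 1])

lemma tendsto_rho_vgood: "((\<lambda>p. rho VP (vgood p)) \<longlongrightarrow> 1) (at_right 0)"
  unfolding vgood_def rho_def by real_asymp

lemma tendsto_scaled_gumbel_emax_vgood: "((\<lambda>p. p * gumbel_emax [VP, vgood p]) \<longlongrightarrow> 1) (at_right 0)"
  unfolding gumbel_emax_pair vgood_def by real_asymp

lemma tendsto_explore_prob_vgood: "((\<lambda>p. explore_prob VP p (vgood p) t) \<longlongrightarrow> 1) (at_right 0)"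
proof (rule tendsto_sandwich[where h = "\<lambda>_. 1"])
  show "\<forall>\<^sub>F p in at_right 0. rho VP (vgood p) ^ t \<le> explore_prob VP p (vgood p) t"
    using eventually_at_right_0_less_1 by eventually_elim (simp add: explore_prob_ge)
  show "((\<lambda>p. rho VP (vgood p) ^ t) \<longlongrightarrow> 1) (at_right 0)"
    using tendsto_power[OF tendsto_rho_vgood, of VP t] by simp
qed (simp_all add: explore_prob_le_one)

lemma eventually_no_explore_after_failure:
  "\<forall>\<^sub>F p in at_right 0. \<forall>S F. S + F \<le> t \<longrightarrow> 0 < F \<longrightarrow> \<not> pear_explore VP p S F"
proof -
  define r where "r = rho VP (-1)"
  define m where "m = min r (1 - r)"
  have m: "0 < m" "m \<le> 1"
    unfolding m_def r_def using rho_pos[of VP "-1"] rho_less_one[of VP "-1"] by auto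
  have "((\<lambda>p. 1 - rho VP (vgood p)) \<longlongrightarrow> 0) (at_right 0)"
    using tendsto_diff[OF tendsto_const[of 1] tendsto_rho_vgood[of VP]] by simp
  then have "\<forall>\<^sub>F p in at_right 0. 1 - rho VP (vgood p) < m ^ t"
    using m by (intro order_tendstoD) auto
  \<comment> \<open>A history containing a failure has likelihood at most \<open>1 - rho VP (vgood p) \<rightarrow> 0\<close>
    under the good hypothesis but at least \<open>m ^ t\<close> under the bad one.\<close>
  with eventually_at_right_0_less_1 show ?thesis
  proof eventually_elim
    case (elim p)
    show ?case
    proof (intro allI impI)
      fix S F :: nat
      assume SF: "S + F \<le> t" "0 < F"
      define q where "q = rho VP (vgood p)"
      have q: "0 < q" "q < 1"
        unfolding q_def using rho_pos rho_less_one by auto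
      have "q ^ S * (1 - q) ^ F \<le> 1 - q"
        using q SF(2) mult_mono[OF power_le_one power_decreasing[of 1 F "1 - q"]] by simp
      also have "\<dots> < m ^ t"
        using elim q_def by simp
      also have "\<dots> \<le> m ^ S * m ^ F"
        using m SF(1) by (simp add: power_decreasing flip: power_add)
      also have "\<dots> \<le> r ^ S * (1 - r) ^ F"
        using m by (intro mult_mono power_mono) (auto simp: m_def)
      finally show "\<not> pear_explore VP p S F"
        using pear_explore_iff[of p VP S F] elim unfolding r_def q_def by simp
    qed
  qed
qed

lemma pear_mean_reward_tendsto:
  "((\<lambda>p. pear_mean_reward VP p t) \<longlongrightarrow>
     1 + gumbel_emax [VP, VP] + (gumbel_emax [VP, -1] - gumbel_emax [VP, VP]) * rho VP (-1) ^ t)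
   (at_right 0)"
proof -
  define B where "B = gumbel_emax [VP, VP]"
  define A where "A = gumbel_emax [VP, -1]"
  define x where "x p = explore_prob VP p (vgood p) t" for p
  have "((\<lambda>p. p * B * (1 - x p) + p * gumbel_emax [VP, vgood p] * x p) \<longlongrightarrow> 0 * B * (1 - 1) + 1 * 1)
      (at_right 0)"
    unfolding x_def
    by (intro tendsto_intros tendsto_scaled_gumbel_emax_vgood tendsto_explore_prob_vgood)
  moreover have "((\<lambda>p. (1 - p) * (B + (A - B) * rho VP (-1) ^ t)) \<longlongrightarrow> (1 - 0) * (B + (A - B) * rho VP (-1) ^ t))
      (at_right 0)"
    by (intro tendsto_intros)
  ultimately have "((\<lambda>p. p * B * (1 - x p) + p * gumbel_emax [VP, vgood p] * x p
      + (1 - p) * (B + (A - B) * rho VP (-1) ^ t)) \<longlongrightarrow> 1 + B + (A - B) * rho VP (-1) ^ t) (at_right 0)"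
    by (auto intro: tendsto_eq_intros)
  moreover have "\<forall>\<^sub>F p in at_right 0. p * B * (1 - x p) + p * gumbel_emax [VP, vgood p] * x p
      + (1 - p) * (B + (A - B) * rho VP (-1) ^ t) = pear_mean_reward VP p t"
    using eventually_at_right_0_less_1 eventually_no_explore_after_failure[of t VP]
  proof eventually_elim
    case (elim p)
    then show ?case
      unfolding pear_mean_reward_def expectation_pear_reward x_def A_def B_def
      by (simp add: explore_prob_eq_if_no_explore_after_failure algebra_simps)
  qed
  ultimately show ?thesis
    unfolding A_def B_def by (rule Lim_transform_eventually)
qed

lemma scaled_gumbel_emax_vgood_le:
  assumes "0 < p" "p < 1"
  shows "p * gumbel_emax [VP, vgood p] \<le> 1 + ln (2 + exp VP)"
proof -
  have "1 \<le> exp (vgood p)"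
    using assms unfolding vgood_def by simp
  moreover from this have "exp VP \<le> exp VP * exp (vgood p)"
    by simp
  ultimately have "1 + exp VP + exp (vgood p) \<le> (2 + exp VP) * exp (vgood p)"
    unfolding distrib_right by linarith
  then have "gumbel_emax [VP, vgood p] \<le> ln ((2 + exp VP) * exp (vgood p))"
    unfolding gumbel_emax_pair by (simp add: add_pos_pos)
  also have "\<dots> = ln (2 + exp VP) + vgood p"
    using exp_gt_zero[of VP] by (simp add: ln_mult add_nonneg_eq_0_iff)
  finally have "p * gumbel_emax [VP, vgood p] \<le> p * ln (2 + exp VP) + p * vgood p"
    using assms by (simp add: mult_left_mono flip: distrib_left)
  also have "p * vgood p = 1 - p"
    using assms unfolding vgood_def by simp
  moreover have "p * ln (2 + exp VP) \<le> ln (2 + exp VP)"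
    using assms by (simp add: mult_left_le_one_le add_pos_pos)
  ultimately show ?thesis
    using assms by simp
qed

lemma pear_mean_reward_bounds:
  assumes "0 < p" "p < 1"
  shows "0 \<le> pear_mean_reward VP p t"
    and "pear_mean_reward VP p t \<le>
      1 + ln (2 + exp VP) + 2 * gumbel_emax [VP, VP] + gumbel_emax [VP, -1]"
proof -
  let ?Eg = "measure_pmf.expectation (pear_state VP p (vgood p) t) (pear_reward VP p (vgood p))"
  let ?Eb = "measure_pmf.expectation (pear_state VP p (-1) t) (pear_reward VP p (-1))"
  note Eg = expectation_pear_reward_bounds[of VP p "vgood p" t]
  note Eb = expectation_pear_reward_bounds[of VP p "-1" t]
  show "0 \<le> pear_mean_reward VP p t"
    unfolding pear_mean_reward_def using assms Eg(1) Eb(1) by simp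
  have "p * ?Eg \<le> p * gumbel_emax [VP, vgood p] + p * gumbel_emax [VP, VP]"
    using assms Eg(2) by (simp flip: distrib_left)
  also have "\<dots> \<le> 1 + ln (2 + exp VP) + gumbel_emax [VP, VP]"
    using assms scaled_gumbel_emax_vgood_le[OF assms, of VP]
      mult_left_le_one_le[OF gumbel_emax_nonneg[of "[VP, VP]"], of p] by simp
  finally have "p * ?Eg \<le> 1 + ln (2 + exp VP) + gumbel_emax [VP, VP]" .
  moreover have "(1 - p) * ?Eb \<le> gumbel_emax [VP, -1] + gumbel_emax [VP, VP]"
    using assms Eb mult_left_le_one_le[OF Eb(1), of "1 - p"] by simp
  ultimately show "pear_mean_reward VP p t \<le>
      1 + ln (2 + exp VP) + 2 * gumbel_emax [VP, VP] + gumbel_emax [VP, -1]"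
    unfolding pear_mean_reward_def by simp
qed

lemma Util_PEAR_tendsto:
  fixes \<delta> :: real
  assumes "\<bar>\<delta>\<bar> < 1"
  shows "((\<lambda>p. Util_PEAR VP p \<delta>) \<longlongrightarrow>
     (1 + gumbel_emax [VP, VP]) / (1 - \<delta>)
     + (gumbel_emax [VP, -1] - gumbel_emax [VP, VP]) / (1 - \<delta> * rho VP (-1))) (at_right 0)"
proof -
  define B where "B = gumbel_emax [VP, VP]"
  define A where "A = gumbel_emax [VP, -1]"
  define r where "r = rho VP (-1)"
  define C where "C = 1 + ln (2 + exp VP) + 2 * B + A"
  have "\<forall>\<^sub>F (k, p) in (at_top :: nat filter) \<times>\<^sub>F at_right 0. 0 < p \<and> p < (1::real)"
    using eventually_prod2[where A = "at_top :: nat filter" and B = "at_right 0" and P = "\<lambda>p. 0 < p \<and> p < (1::real)"]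
      eventually_at_right_0_less_1 by simp
  then have bound: "\<forall>\<^sub>F (k, p) in at_top \<times>\<^sub>F at_right 0.
      norm (\<delta> ^ k * pear_mean_reward VP p k) \<le> \<bar>\<delta>\<bar> ^ k * C"
    by (rule eventually_mono)
      (use pear_mean_reward_bounds in \<open>auto simp: abs_mult power_abs B_def A_def C_def intro!: mult_left_mono\<close>)
  have "summable (\<lambda>k. \<bar>\<delta>\<bar> ^ k * C)"
    using assms by (intro summable_mult2 summable_geometric) simp
  then have "((\<lambda>p. \<Sum>k. \<delta> ^ k * pear_mean_reward VP p k) \<longlongrightarrow>
      (\<Sum>k. \<delta> ^ k * (1 + B + (A - B) * r ^ k))) (at_right 0)"
    using tannerys_theorem[OF tendsto_mult_left[OF pear_mean_reward_tendsto] bound]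
    unfolding A_def B_def r_def by simp
  moreover have "\<bar>\<delta> * r\<bar> < 1"
    unfolding r_def using assms by (rule abs_mult_rho_less_one)
  then have "(\<lambda>k. (1 + B) * \<delta> ^ k + (A - B) * (\<delta> * r) ^ k) sums
      ((1 + B) * (1 / (1 - \<delta>)) + (A - B) * (1 / (1 - \<delta> * r)))"
    using assms by (intro sums_add sums_mult geometric_sums) simp_all
  then have "(\<Sum>k. \<delta> ^ k * (1 + B + (A - B) * r ^ k)) = (1 + B) / (1 - \<delta>) + (A - B) / (1 - \<delta> * r)"
    by (simp add: sums_iff algebra_simps power_mult_distrib)
  moreover have "\<forall>\<^sub>F p in at_right 0. (\<Sum>k. \<delta> ^ k * pear_mean_reward VP p k) = Util_PEAR VP p \<delta>"
    using eventually_at_right_0_less_1 by eventually_elim (simp add: Util_PEAR_eq)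
  ultimately show ?thesis
    unfolding A_def B_def r_def by (auto intro: Lim_transform_eventually)
qed

lemma Util_APP_eq:
  fixes \<delta> :: real
  assumes "\<bar>\<delta>\<bar> < 1"
  shows "Util_APP VP p \<delta> = gumbel_emax [VP, VP] / (1 - \<delta>)"
proof -
  have "(\<lambda>t. gumbel_emax [VP, VP] * \<delta> ^ t) sums (gumbel_emax [VP, VP] * (1 / (1 - \<delta>)))"
    using assms by (intro sums_mult geometric_sums) simp
  then show ?thesis
    unfolding Util_APP_def by (simp add: sums_iff mult.commute)
qed

lemma relative_gain_tendsto:
  fixes \<delta> :: real
  assumes "\<bar>\<delta>\<bar> < 1"
  shows "((\<lambda>p. (Util_PEAR VP p \<delta> - Util_APP VP p \<delta>) / Util_APP VP p \<delta>) \<longlongrightarrow>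
     (1 + (gumbel_emax [VP, -1] - gumbel_emax [VP, VP]) * (1 - \<delta>) / (1 - \<delta> * rho VP (-1)))
       / gumbel_emax [VP, VP]) (at_right 0)"
proof -
  define B where "B = gumbel_emax [VP, VP]"
  define A where "A = gumbel_emax [VP, -1]"
  define r where "r = rho VP (-1)"
  have "0 < B"
    unfolding B_def by (rule gumbel_emax_pair_pos)
  have "1 - \<delta> \<noteq> 0" "1 - \<delta> * r \<noteq> 0"
    using assms abs_mult_rho_less_one[OF assms, of VP "-1"] unfolding r_def by auto
  have rescale: "(1 / d + X / e) / (B / d) = (1 + X * d / e) / B" if "d \<noteq> 0" "e \<noteq> 0" for d e X :: real
    using that \<open>0 < B\<close> by (simp add: field_simps)
  have "((1 + B) / (1 - \<delta>) + (A - B) / (1 - \<delta> * r) - B / (1 - \<delta>)) / (B / (1 - \<delta>))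
      = (1 / (1 - \<delta>) + (A - B) / (1 - \<delta> * r)) / (B / (1 - \<delta>))"
    by (simp add: add_divide_distrib)
  also have "\<dots> = (1 + (A - B) * (1 - \<delta>) / (1 - \<delta> * r)) / B"
    by (rule rescale) fact+
  finally have limit_eq: "((1 + B) / (1 - \<delta>) + (A - B) / (1 - \<delta> * r) - B / (1 - \<delta>)) / (B / (1 - \<delta>))
      = (1 + (A - B) * (1 - \<delta>) / (1 - \<delta> * r)) / B" .
  have "((\<lambda>p. (Util_PEAR VP p \<delta> - B / (1 - \<delta>)) / (B / (1 - \<delta>))) \<longlongrightarrow>
      ((1 + B) / (1 - \<delta>) + (A - B) / (1 - \<delta> * r) - B / (1 - \<delta>)) / (B / (1 - \<delta>))) (at_right 0)"
    using Util_PEAR_tendsto[OF assms, of VP] \<open>0 < B\<close> \<open>1 - \<delta> \<noteq> 0\<close>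
    unfolding A_def B_def r_def by (intro tendsto_intros) auto
  from this[unfolded limit_eq] show ?thesis
    unfolding Util_APP_eq[OF assms] A_def B_def r_def .
qed

lemma exp_ge_partial_sum:
  fixes x :: real
  assumes "0 \<le> x"
  shows "(\<Sum>n<N. x ^ n / fact n) \<le> exp x"
proof -
  have "(\<lambda>n. x ^ n / fact n) sums exp x"
    using exp_converges[of x] by (simp add: divide_inverse_commute scaleR_conv_of_real)
  then have "(\<Sum>n<N. x ^ n / fact n) \<le> (\<Sum>n. x ^ n / fact n)"
    using assms by (intro sum_le_suminf) (auto simp: sums_iff)
  then show ?thesis
    using \<open>(\<lambda>n. x ^ n / fact n) sums exp x\<close> by (simp add: sums_iff)
qed

lemma one_le_exp_mult_e_minus_2:
  fixes x :: real
  assumes "1/3 \<le> x"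
  shows "1 \<le> exp x * (exp 1 - 2)"
proof -
  \<comment> \<open>the Taylor polynomial of degree 4 of exp at 1/3\<close>
  define c :: real where "c = 2713/1944"
  have c: "0 \<le> c" "2 \<le> c ^ 3" "1 \<le> c * (c ^ 3 - 2)"
    unfolding c_def by (simp_all add: power3_eq_cube)
  have "c \<le> exp (1/3)"
    using exp_ge_partial_sum[of "1/3" 5] unfolding c_def
    by (simp add: numeral_eq_Suc lessThan_Suc)
  moreover have "exp 1 = exp (1/3 :: real) ^ 3"
    by (simp flip: exp_of_nat_mult)
  ultimately have "c ^ 3 \<le> exp 1"
    using c(1) by (metis power_mono)
  then have "c * (c ^ 3 - 2) \<le> exp (1/3) * (exp 1 - 2)"
    using \<open>c \<le> exp (1/3)\<close> c by (intro mult_mono) simp_all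
  with c(3) have "1 \<le> exp (1/3) * (exp 1 - (2::real))"
    by linarith
  moreover have "0 \<le> exp 1 - (2::real)"
    using \<open>c ^ 3 \<le> exp 1\<close> c(2) by linarith
  then have "exp (1/3) * (exp 1 - 2) \<le> exp x * (exp 1 - 2)"
    using assms by (intro mult_right_mono) simp_all
  ultimately show ?thesis
    by linarith
qed

lemma gumbel_emax_popular_le:
  assumes "1/3 \<le> VP"
  shows "gumbel_emax [VP, VP] \<le> VP + 1"
proof -
  have "1 + 2 * exp VP \<le> exp (VP + 1)"
    using one_le_exp_mult_e_minus_2[OF assms] by (simp add: exp_add algebra_simps)
  then have "ln (1 + 2 * exp VP) \<le> VP + 1"
    by (metis add_pos_pos exp_gt_zero ln_exp ln_le_cancel_iff mult_pos_pos zero_less_one zero_less_numeral)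
  then show ?thesis
    unfolding gumbel_emax_pair by (simp add: add.commute)
qed

theorem mainTheorem6:
  fixes VP :: real
  assumes "VP \<ge> 1/3"
  shows "\<exists>g L. (\<forall>\<^sub>F \<delta> in at_left (1::real).
            ((\<lambda>p. (Util_PEAR VP p \<delta> - Util_APP VP p \<delta>) / Util_APP VP p \<delta>) \<longlongrightarrow> g \<delta>)
              (at_right 0))
          \<and> (g \<longlongrightarrow> L) (at_left 1)
          \<and> 1 / (VP + 1) \<le> L"
proof (intro exI conjI)
  define B where "B = gumbel_emax [VP, VP]"
  define A where "A = gumbel_emax [VP, -1]"
  define r where "r = rho VP (-1)"
  have "\<forall>\<^sub>F \<delta> in at_left (1::real). \<bar>\<delta>\<bar> < 1"
    by (auto simp: eventually_at_left_field intro: exI[of _ 0])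
  then show "\<forall>\<^sub>F \<delta> in at_left 1. ((\<lambda>p. (Util_PEAR VP p \<delta> - Util_APP VP p \<delta>) / Util_APP VP p \<delta>)
      \<longlongrightarrow> (1 + (A - B) * (1 - \<delta>) / (1 - \<delta> * r)) / B) (at_right 0)"
    unfolding A_def B_def r_def by eventually_elim (rule relative_gain_tendsto)
  have "r < 1" "0 < B"
    unfolding r_def B_def by (rule rho_less_one, rule gumbel_emax_pair_pos)
  then have "((\<lambda>\<delta>. (1 + (A - B) * (1 - \<delta>) / (1 - \<delta> * r)) / B) \<longlongrightarrow>
      (1 + (A - B) * (1 - 1) / (1 - 1 * r)) / B) (at_left 1)"
    by (intro tendsto_intros) auto
  then show "((\<lambda>\<delta>. (1 + (A - B) * (1 - \<delta>) / (1 - \<delta> * r)) / B) \<longlongrightarrow> 1 / B) (at_left 1)"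
    by simp
  show "1 / (VP + 1) \<le> 1 / B"
    using gumbel_emax_popular_le[OF assms] gumbel_emax_pair_pos unfolding B_def
    by (simp add: frac_le)
qed

end
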